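(* Let $d\ge1$, $\alpha\in(0,1]$, $\beta\ge\alpha$, $C<\infty$, and let $\pi$ be a probability measure on $\mathbb R^d$ with $\int_{\mathbb R^d}|x|_\infty^\beta\,d\pi(x)<\infty$. Let $W$ be a graphon over $(\mathbb R^d,\pi)$ with $\|W\|_1=1$ satisfying $|W(x,y)-W(x',y)|\le C|x-x'|_\infty^\alpha$ for all $x,x',y\in\mathbb R^d$. If $1\le p<\beta/\alpha$ and $\kappa\le1/2$, then \[ \varepsilon^{(p)}_{\ge\kappa}(W)=O(\kappa^{\alpha'})\qquad\text{and}\qquad\mathrm{tail}^{(p)}_\rho(W)=O(\rho^{\beta'}), \] where $\beta'=\frac{\beta}{p\alpha}-1$ and $\alpha'=\frac{\alpha}{p\alpha+d}\cdot\frac{\beta'}{1+\beta'}$, and the implicit constants depend only on $\pi$, $\alpha$, $\beta$, $p$ and $C$.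
   Context: A graphon over $(\mathbb R^d,\pi)$ (Borel $\sigma$-algebra) is a measurable symmetric $W:\mathbb R^d\times\mathbb R^d\to[0,\infty)$ with $\|W\|_1<\infty$, $\|W\|_p^p=\int|W|^p\,d\pi\,d\pi$; $|\cdot|_\infty$ is the max norm. $\mathrm{tail}^{(p)}_\rho(W)=\|W-\min\{W,\rho^{-1}\}\|_p$ for $\rho>0$. A block model $(\mathbf p,B)$ is the graphon on $[k]$ with measure $\mathbf p$ and $W(i,j)=B_{ij}$. $\delta_p(W,W')=\inf_\nu(\int|W(x,y)-W'(x',y')|^pd\nu(x,x')d\nu(y,y'))^{1/p}$ over couplings $\nu$ of the underlying measures. $\varepsilon^{(p)}_{\ge\kappa}(W)=\inf\{\delta_p(W,W'):W'=(\mathbf p,B)\text{ block model},\min_ip_i\ge\kappa\}$. *)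

theory Defs
  imports "HOL-Probability.Probability"
begin

definition enn_root :: "real \<Rightarrow> ennreal \<Rightarrow> ennreal" where
  "enn_root p x = (if x = \<infinity> then \<infinity> else ennreal (enn2real x powr (1 / p)))"

definition graphon :: "'a measure \<Rightarrow> ('a \<Rightarrow> 'a \<Rightarrow> real) \<Rightarrow> bool" where
  "graphon mu W \<longleftrightarrow> (\<lambda>z. W (fst z) (snd z)) \<in> borel_measurable (mu \<Otimes>\<^sub>M mu)
     \<and> (\<forall>x y. W x y = W y x) \<and> (\<forall>x y. 0 \<le> W x y)
     \<and> (\<integral>\<^sup>+ z. ennreal \<bar>W (fst z) (snd z)\<bar> \<partial>(mu \<Otimes>\<^sub>M mu)) < \<infinity>"

definition graphon_norm :: "real \<Rightarrow> 'a measure \<Rightarrow> ('a \<Rightarrow> 'a \<Rightarrow> real) \<Rightarrow> ennreal" where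
  "graphon_norm p mu W =
     enn_root p (\<integral>\<^sup>+ z. ennreal (\<bar>W (fst z) (snd z)\<bar> powr p) \<partial>(mu \<Otimes>\<^sub>M mu))"

definition graphon_tail :: "real \<Rightarrow> real \<Rightarrow> 'a measure \<Rightarrow> ('a \<Rightarrow> 'a \<Rightarrow> real) \<Rightarrow> ennreal" where
  "graphon_tail p \<rho> mu W = graphon_norm p mu (\<lambda>x y. W x y - min (W x y) (1 / \<rho>))"

definition coupling :: "'a measure \<Rightarrow> 'b measure \<Rightarrow> ('a \<times> 'b) measure \<Rightarrow> bool" where
  "coupling mu1 mu2 nu \<longleftrightarrow> sets nu = sets (mu1 \<Otimes>\<^sub>M mu2)
     \<and> (\<forall>A\<in>sets mu1. emeasure nu (A \<times> space mu2) = emeasure mu1 A)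
     \<and> (\<forall>B\<in>sets mu2. emeasure nu (space mu1 \<times> B) = emeasure mu2 B)"

definition delta_p :: "real \<Rightarrow> 'a measure \<Rightarrow> ('a \<Rightarrow> 'a \<Rightarrow> real) \<Rightarrow> 'b measure \<Rightarrow> ('b \<Rightarrow> 'b \<Rightarrow> real) \<Rightarrow> ennreal" where
  "delta_p p mu1 W mu2 W' = enn_root p
     (INF nu \<in> {nu. coupling mu1 mu2 nu}.
        \<integral>\<^sup>+ z. ennreal (\<bar>W (fst (fst z)) (fst (snd z)) - W' (snd (fst z)) (snd (snd z))\<bar> powr p) \<partial>(nu \<Otimes>\<^sub>M nu))"

definition block_measure :: "nat \<Rightarrow> (nat \<Rightarrow> real) \<Rightarrow> nat measure" where
  "block_measure k q = point_measure {..<k} (\<lambda>i. ennreal (q i))"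

text \<open>Block models \<open>(\<bold>p, B)\<close> on k classes, with \<open>min_i p_i \<ge> \<kappa>\<close>: \<open>\<bold>p\<close> a probability vector,
  B a symmetric nonnegative matrix (so that the block model is a graphon).\<close>
definition block_model_ge :: "real \<Rightarrow> nat \<Rightarrow> (nat \<Rightarrow> real) \<Rightarrow> (nat \<Rightarrow> nat \<Rightarrow> real) \<Rightarrow> bool" where
  "block_model_ge \<kappa> k q B \<longleftrightarrow> k \<ge> 1 \<and> (\<forall>i<k. q i \<ge> \<kappa> \<and> q i \<ge> 0) \<and> (\<Sum>i<k. q i) = 1
     \<and> (\<forall>i<k. \<forall>j<k. B i j = B j i \<and> 0 \<le> B i j)"

definition eps_block :: "real \<Rightarrow> real \<Rightarrow> 'a measure \<Rightarrow> ('a \<Rightarrow> 'a \<Rightarrow> real) \<Rightarrow> ennreal" where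
  "eps_block p \<kappa> mu W = (INF (k, q, B) \<in> {(k, q, B). block_model_ge \<kappa> k q B}.
      delta_p p mu W (block_measure k q) B)"

end

theory Submission
  imports Defs
begin

text \<open>
  The tail bound: integrating the H\<ouml>lder condition against \<open>\<parallel>W\<parallel>\<^sub>1 = 1\<close> shows
  \<open>W(x, y) \<le> c + C|x|\<^sup>\<alpha> + C|y|\<^sup>\<alpha>\<close>, so \<open>W\<^bsup>\<beta>/\<alpha>\<^esup>\<close> is integrable by the \<open>\<beta>\<close>-moment, and the part of
  \<open>W\<close> above \<open>1/\<rho>\<close> is controlled as in Markov's inequality.

  The block approximation: label each point by the corner of its cell in a grid of mesh \<open>h\<close> on the box
  of radius \<open>R\<close>, keep the cells of mass at least \<open>\<kappa>\<close> as classes and merge all other points into one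
  heavy class. Coupling every point with its class, the H\<ouml>lder condition bounds \<open>\<delta>\<^sub>p\<^sup>p\<close> by the
  \<open>\<alpha>p\<close>-th moment of the distance to the label, which is at most \<open>h\<^bsup>\<alpha>p\<^esup>\<close> on heavy cells,
  \<open>(3R)\<^bsup>\<alpha>p\<^esup> \<kappa> (R/h)\<^sup>d\<close> on the light cells and \<open>R\<^bsup>\<alpha>p - \<beta>\<^esup>\<close> times the moment outside the box.
  Choosing \<open>h\<close> and \<open>R\<close> as powers of \<open>\<kappa>\<close> balances the three terms.
\<close>

lemma powr_add_le_add_powr:
  fixes a b \<alpha> :: real
  assumes "0 \<le> a" "0 \<le> b" "0 < \<alpha>" "\<alpha> \<le> 1"
  shows "(a + b) powr \<alpha> \<le> a powr \<alpha> + b powr \<alpha>"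
proof (cases "a + b = 0")
  case True
  then show ?thesis using assms by auto
next
  case False
  hence s: "a + b > 0" using assms by auto
  have "1 = a / (a + b) + b / (a + b)"
    using s by (simp add: add_divide_distrib[symmetric])
  also have "\<dots> \<le> (a / (a + b)) powr \<alpha> + (b / (a + b)) powr \<alpha>"
    using powr_mono'[of \<alpha> 1 "a / (a + b)"] powr_mono'[of \<alpha> 1 "b / (a + b)"] assms s
    by (intro add_mono) auto
  also have "\<dots> = (a powr \<alpha> + b powr \<alpha>) / (a + b) powr \<alpha>"
    using assms s by (simp add: powr_divide add_divide_distrib)
  finally show ?thesis using s by (simp add: field_simps)
qed

lemma powr_add_le_2_powr:
  fixes a b q :: real
  assumes "0 \<le> a" "0 \<le> b" "0 \<le> q"
  shows "(a + b) powr q \<le> 2 powr q * (a powr q + b powr q)"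
proof -
  have "(a + b) powr q \<le> (2 * max a b) powr q"
    by (rule powr_mono2) (use assms in auto)
  also have "\<dots> = 2 powr q * max a b powr q" using assms by (simp add: powr_mult)
  also have "max a b powr q \<le> a powr q + b powr q" by (simp add: max_def)
  finally show ?thesis by (simp add: mult_left_mono)
qed

lemma powr_add3_le_3_powr:
  fixes a b c q :: real
  assumes "0 \<le> a" "0 \<le> b" "0 \<le> c" "0 \<le> q"
  shows "(a + b + c) powr q \<le> 3 powr q * (a powr q + b powr q + c powr q)"
proof -
  have "(a + b + c) powr q \<le> (3 * max a (max b c)) powr q"
    by (rule powr_mono2) (use assms in auto)
  also have "\<dots> = 3 powr q * max a (max b c) powr q" using assms by (simp add: powr_mult)
  also have "max a (max b c) powr q \<le> a powr q + b powr q + c powr q" by (simp add: max_def)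
  finally show ?thesis by (simp add: mult_left_mono)
qed

lemma powr_le_one_plus_powr:
  fixes t \<gamma> \<beta> :: real
  assumes "0 \<le> t" "0 \<le> \<gamma>" "\<gamma> \<le> \<beta>"
  shows "t powr \<gamma> \<le> 1 + t powr \<beta>"
proof (cases "t \<le> 1")
  case True
  hence "t powr \<gamma> \<le> 1" using assms powr_mono2[of \<gamma> t 1] by simp
  then show ?thesis by (simp add: add_increasing2)
next
  case False
  hence "t powr \<gamma> \<le> t powr \<beta>" using assms by (intro powr_mono) auto
  then show ?thesis by simp
qed

lemma powr_le_powr_diff_mult_powr:
  fixes t R s \<beta> :: real
  assumes "0 < R" "R \<le> t" "s \<le> \<beta>"
  shows "t powr s \<le> R powr (s - \<beta>) * t powr \<beta>"
proof -
  have "t powr s = t powr (s - \<beta>) * t powr \<beta>"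
    using assms by (simp add: powr_add[symmetric])
  also have "\<dots> \<le> R powr (s - \<beta>) * t powr \<beta>"
    using assms by (intro mult_right_mono powr_mono2') auto
  finally show ?thesis .
qed

text \<open>The excess of \<open>w\<close> over the level \<open>1/\<rho>\<close> vanishes unless \<open>\<rho> G \<ge> 1\<close>, which pays for the extra
  power \<open>q - p\<close>.\<close>
lemma truncation_excess_powr_le:
  fixes w G \<rho> p q :: real
  assumes "0 \<le> w" "w \<le> G" "0 < \<rho>" "0 \<le> p" "p \<le> q"
  shows "\<bar>w - min w (1 / \<rho>)\<bar> powr p \<le> \<rho> powr (q - p) * G powr q"
proof (cases "w \<le> 1 / \<rho>")
  case True
  then show ?thesis by simp
next
  case False
  hence "1 < \<rho> * w" using assms by (simp add: field_simps)
  moreover have "\<rho> * w \<le> \<rho> * G" using assms by simp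
  ultimately have G: "1 \<le> \<rho> * G" "0 < G"
    using zero_less_mult_pos[of \<rho> w] assms by linarith+
  have "\<bar>w - min w (1 / \<rho>)\<bar> = w - 1 / \<rho>" "0 < 1 / \<rho>"
    using False assms by auto
  hence "\<bar>w - min w (1 / \<rho>)\<bar> powr p \<le> G powr p"
    using assms by (intro powr_mono2) linarith+
  also have "\<dots> \<le> G powr p * (\<rho> * G) powr (q - p)"
    using G assms by (simp add: ge_one_powr_ge_zero mult_le_cancel_left1)
  also have "\<dots> = \<rho> powr (q - p) * G powr q"
    using G assms by (simp add: powr_mult powr_add[symmetric])
  finally show ?thesis .
qed

lemma enn_root_mono:
  assumes "x \<le> y" "0 < p"
  shows "enn_root p x \<le> enn_root p y"
proof (cases "y = \<infinity>")
  case True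
  then show ?thesis by (simp add: enn_root_def)
next
  case False
  hence "x \<noteq> \<infinity>" using assms(1) by (auto simp: top_unique)
  moreover have "enn2real x powr (1/p) \<le> enn2real y powr (1/p)"
    using assms False by (intro powr_mono2 enn2real_mono) (auto simp: less_top)
  ultimately show ?thesis using False by (simp add: enn_root_def ennreal_leI)
qed

lemma enn_root_ennreal: "0 \<le> v \<Longrightarrow> enn_root p (ennreal v) = ennreal (v powr (1/p))"
  by (simp add: enn_root_def)

lemma nn_integral_pair_le:
  fixes F h :: "'a \<times> 'a \<Rightarrow> real" and g :: "'a \<Rightarrow> real" and a G H :: real
  assumes M: "prob_space M"
    and g: "g \<in> borel_measurable M" "\<And>x. 0 \<le> g x" "(\<integral>\<^sup>+ x. ennreal (g x) \<partial>M) \<le> ennreal G"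
    and h: "h \<in> borel_measurable (M \<Otimes>\<^sub>M M)" "\<And>z. 0 \<le> h z"
      "(\<integral>\<^sup>+ z. ennreal (h z) \<partial>(M \<Otimes>\<^sub>M M)) \<le> ennreal H"
    and F: "\<And>x y. F (x, y) \<le> a + h (x, y) + g x + g y"
    and "0 \<le> a" "0 \<le> G" "0 \<le> H"
  shows "(\<integral>\<^sup>+ z. ennreal (F z) \<partial>(M \<Otimes>\<^sub>M M)) \<le> ennreal (a + H + 2 * G)"
proof -
  interpret M: prob_space M by fact
  interpret P: pair_sigma_finite M M ..
  interpret MM: prob_space "M \<Otimes>\<^sub>M M" by (rule prob_space_pair[OF M M])
  have gfst: "(\<integral>\<^sup>+ z. ennreal (g (fst z)) \<partial>(M \<Otimes>\<^sub>M M)) = (\<integral>\<^sup>+ x. ennreal (g x) \<partial>M)"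
    using M.nn_integral_fst[of "\<lambda>z. ennreal (g (fst z))" M] g(1) by (simp add: M.emeasure_space_1)
  have gsnd: "(\<integral>\<^sup>+ z. ennreal (g (snd z)) \<partial>(M \<Otimes>\<^sub>M M)) = (\<integral>\<^sup>+ x. ennreal (g x) \<partial>M)"
    using P.nn_integral_snd[of "\<lambda>z. ennreal (g (snd z))"] g(1) by (simp add: M.emeasure_space_1)
  have "(\<integral>\<^sup>+ z. ennreal (F z) \<partial>(M \<Otimes>\<^sub>M M))
      \<le> (\<integral>\<^sup>+ z. ennreal a + ennreal (h z) + ennreal (g (fst z)) + ennreal (g (snd z)) \<partial>(M \<Otimes>\<^sub>M M))"
  proof (rule nn_integral_mono)
    fix z :: "'a \<times> 'a"
    have "ennreal (F z) \<le> ennreal (a + h z + g (fst z) + g (snd z))"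
      using F[of "fst z" "snd z"] by (intro ennreal_leI) simp
    then show "ennreal (F z) \<le> ennreal a + ennreal (h z) + ennreal (g (fst z)) + ennreal (g (snd z))"
      using assms by (simp add: ennreal_plus)
  qed
  also have "\<dots> = ennreal a + (\<integral>\<^sup>+ z. ennreal (h z) \<partial>(M \<Otimes>\<^sub>M M))
      + (\<integral>\<^sup>+ x. ennreal (g x) \<partial>M) + (\<integral>\<^sup>+ x. ennreal (g x) \<partial>M)"
    using g(1) h(1) by (simp add: nn_integral_add MM.emeasure_space_1 gfst gsnd)
  also have "\<dots> \<le> ennreal a + ennreal H + ennreal G + ennreal G"
    using g h by (intro add_mono) auto
  also have "\<dots> = ennreal (a + H + G + G)"
    using assms by (simp only: ennreal_plus add_nonneg_nonneg)
  also have "a + H + G + G = a + H + 2 * G"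
    by simp
  finally show ?thesis .
qed

lemma nn_integral_cmult_le:
  fixes g :: "'a \<Rightarrow> real" and c G :: real
  assumes "g \<in> borel_measurable M" "(\<integral>\<^sup>+ x. ennreal (g x) \<partial>M) \<le> ennreal G" "0 \<le> c" "0 \<le> G"
  shows "(\<integral>\<^sup>+ x. ennreal (c * g x) \<partial>M) \<le> ennreal (c * G)"
proof -
  have "(\<integral>\<^sup>+ x. ennreal (c * g x) \<partial>M) = ennreal c * (\<integral>\<^sup>+ x. ennreal (g x) \<partial>M)"
    using assms by (simp add: ennreal_mult' nn_integral_cmult)
  also have "\<dots> \<le> ennreal c * ennreal G" using assms(2) by (rule mult_left_mono) simp
  finally show ?thesis using assms by (simp add: ennreal_mult)
qed

lemma nn_integral_powr_le_one_plus:
  fixes f :: "'a \<Rightarrow> real" and \<gamma> \<beta> m :: real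
  assumes "prob_space M" "f \<in> borel_measurable M" "\<And>x. 0 \<le> f x" "0 \<le> \<gamma>" "\<gamma> \<le> \<beta>"
    "(\<integral>\<^sup>+ x. ennreal (f x powr \<beta>) \<partial>M) \<le> ennreal m" "0 \<le> m"
  shows "(\<integral>\<^sup>+ x. ennreal (f x powr \<gamma>) \<partial>M) \<le> ennreal (1 + m)"
proof -
  interpret prob_space M by fact
  have "(\<integral>\<^sup>+ x. ennreal (f x powr \<gamma>) \<partial>M) \<le> (\<integral>\<^sup>+ x. 1 + ennreal (f x powr \<beta>) \<partial>M)"
  proof (rule nn_integral_mono)
    fix x
    have "f x powr \<gamma> \<le> 1 + f x powr \<beta>" using assms by (intro powr_le_one_plus_powr) auto
    then show "ennreal (f x powr \<gamma>) \<le> 1 + ennreal (f x powr \<beta>)"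
      by (metis ennreal_1 ennreal_leI ennreal_plus powr_ge_zero zero_less_one_class.zero_le_one)
  qed
  also have "\<dots> = 1 + (\<integral>\<^sup>+ x. ennreal (f x powr \<beta>) \<partial>M)"
    using assms by (simp add: nn_integral_add emeasure_space_1)
  also have "\<dots> \<le> ennreal (1 + m)"
    using assms by (simp add: ennreal_plus add_left_mono)
  finally show ?thesis .
qed

lemma emeasure_UN_le_card_mult:
  assumes "finite L" "\<And>l. l \<in> L \<Longrightarrow> S l \<in> sets M" "\<And>l. l \<in> L \<Longrightarrow> emeasure M (S l) \<le> ennreal \<kappa>"
    "0 \<le> \<kappa>"
  shows "emeasure M (\<Union>l\<in>L. S l) \<le> ennreal (real (card L) * \<kappa>)"
proof -
  have "emeasure M (\<Union>l\<in>L. S l) \<le> (\<Sum>l\<in>L. emeasure M (S l))"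
    using assms by (intro emeasure_subadditive_finite) auto
  also have "\<dots> \<le> (\<Sum>l\<in>L. ennreal \<kappa>)"
    using assms by (intro sum_mono) auto
  finally show ?thesis
    using assms by (simp add: ennreal_mult ennreal_of_nat_eq_real_of_nat)
qed

lemma nn_integral_le_indicator_plus:
  fixes f g :: "'a \<Rightarrow> real" and a b c G :: real
  assumes M: "prob_space M" and B: "B \<in> sets M" "emeasure M B \<le> ennreal b"
    and g: "g \<in> borel_measurable M" "\<And>x. 0 \<le> g x" "(\<integral>\<^sup>+ x. ennreal (g x) \<partial>M) \<le> ennreal G"
    and f: "\<And>x. x \<in> space M \<Longrightarrow> f x \<le> a + c * indicator B x + g x"
    and "0 \<le> a" "0 \<le> c" "0 \<le> b" "0 \<le> G"
  shows "(\<integral>\<^sup>+ x. ennreal (f x) \<partial>M) \<le> ennreal (a + c * b + G)"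
proof -
  interpret prob_space M by fact
  have "(\<integral>\<^sup>+ x. ennreal (f x) \<partial>M) \<le> (\<integral>\<^sup>+ x. ennreal a + ennreal c * indicator B x + ennreal (g x) \<partial>M)"
  proof (rule nn_integral_mono)
    fix x assume "x \<in> space M"
    hence "ennreal (f x) \<le> ennreal (a + c * indicator B x + g x)" using f by (intro ennreal_leI)
    then show "ennreal (f x) \<le> ennreal a + ennreal c * indicator B x + ennreal (g x)"
      using assms by (simp add: ennreal_plus ennreal_mult ennreal_indicator)
  qed
  also have "\<dots> = ennreal a + ennreal c * emeasure M B + (\<integral>\<^sup>+ x. ennreal (g x) \<partial>M)"
    using B g by (simp add: nn_integral_add nn_integral_cmult_indicator emeasure_space_1)
  also have "\<dots> \<le> ennreal a + ennreal c * ennreal b + ennreal G"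
    using B g by (intro add_mono mult_left_mono) auto
  also have "\<dots> = ennreal (a + c * b + G)"
    using assms by (simp add: ennreal_plus ennreal_mult)
  finally show ?thesis .
qed

section \<open>H\<ouml>lder graphons and their tails\<close>

lemma borel_measurable_infnorm[measurable]:
  "(infnorm :: 'a::euclidean_space \<Rightarrow> real) \<in> borel_measurable borel"
  by (intro borel_measurable_continuous_onI continuous_on_infnorm continuous_on_id)

lemma infnorm_diff_powr_le:
  fixes a b :: "'a::euclidean_space" and \<alpha> :: real
  assumes "0 < \<alpha>" "\<alpha> \<le> 1"
  shows "infnorm (a - b) powr \<alpha> \<le> infnorm a powr \<alpha> + infnorm b powr \<alpha>"
proof -
  have "infnorm (a - b) \<le> infnorm a + infnorm b"
    using infnorm_triangle[of a "- b"] by (simp add: infnorm_neg)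
  hence "infnorm (a - b) powr \<alpha> \<le> (infnorm a + infnorm b) powr \<alpha>"
    using assms by (intro powr_mono2) (auto simp: infnorm_pos_le)
  also have "\<dots> \<le> infnorm a powr \<alpha> + infnorm b powr \<alpha>"
    using assms by (intro powr_add_le_add_powr) (auto simp: infnorm_pos_le)
  finally show ?thesis .
qed

lemma holder_graphon_diff_le:
  fixes W :: "'a::euclidean_space \<Rightarrow> 'a \<Rightarrow> real" and C \<alpha> :: real
  assumes H: "\<forall>x x' y. \<bar>W x y - W x' y\<bar> \<le> C * infnorm (x - x') powr \<alpha>"
    and sym: "\<And>x y. W x y = W y x"
  shows "\<bar>W x y - W x' y'\<bar> \<le> C * infnorm (x - x') powr \<alpha> + C * infnorm (y - y') powr \<alpha>"
proof -
  have "\<bar>W x y - W x' y\<bar> \<le> C * infnorm (x - x') powr \<alpha>" using H by blast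
  moreover have "\<bar>W y x' - W y' x'\<bar> \<le> C * infnorm (y - y') powr \<alpha>" using H by blast
  ultimately show ?thesis using sym[of y x'] sym[of y' x'] by linarith
qed

lemma holder_graphon_le:
  fixes M :: "'a::euclidean_space measure" and W :: "'a \<Rightarrow> 'a \<Rightarrow> real" and C \<alpha> A :: real
  assumes M: "prob_space M" and Mb: "sets M = sets borel" and G: "graphon M W"
    and N1: "(\<integral>\<^sup>+ z. ennreal \<bar>W (fst z) (snd z)\<bar> \<partial>(M \<Otimes>\<^sub>M M)) = 1"
    and H: "\<forall>x x' y. \<bar>W x y - W x' y\<bar> \<le> C * infnorm (x - x') powr \<alpha>"
    and C: "0 \<le> C" and \<alpha>: "0 < \<alpha>" "\<alpha> \<le> 1"
    and A: "(\<integral>\<^sup>+ x. ennreal (infnorm x powr \<alpha>) \<partial>M) \<le> ennreal A" "0 \<le> A"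
  shows "W x y \<le> 1 + 2 * (C * A) + C * infnorm x powr \<alpha> + C * infnorm y powr \<alpha>"
proof -
  interpret MM: prob_space "M \<Otimes>\<^sub>M M" by (rule prob_space_pair[OF M M])
  have W: "\<And>a b. 0 \<le> W a b" "\<And>a b. W a b = W b a"
    "(\<lambda>z. W (fst z) (snd z)) \<in> borel_measurable (M \<Otimes>\<^sub>M M)"
    using G by (auto simp: graphon_def)
  define a where "a = C * infnorm x powr \<alpha> + C * infnorm y powr \<alpha>"
  txt \<open>Average \<open>W x y \<le> W x' y' + a + C |x'|\<^sup>\<alpha> + C |y'|\<^sup>\<alpha>\<close> over \<open>(x', y')\<close>.\<close>
  have "ennreal (W x y) = (\<integral>\<^sup>+ z. ennreal (W x y) \<partial>(M \<Otimes>\<^sub>M M))"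
    by (simp add: MM.emeasure_space_1)
  also have "\<dots> \<le> ennreal (a + 1 + 2 * (C * A))"
  proof (rule nn_integral_pair_le[OF M])
    show "(\<lambda>x. C * infnorm x powr \<alpha>) \<in> borel_measurable M"
      by (simp add: measurable_cong_sets[OF Mb refl])
    show "(\<integral>\<^sup>+ x. ennreal (C * infnorm x powr \<alpha>) \<partial>M) \<le> ennreal (C * A)"
      using A C by (intro nn_integral_cmult_le) (simp_all add: measurable_cong_sets[OF Mb refl])
    show "(\<integral>\<^sup>+ z. ennreal (W (fst z) (snd z)) \<partial>(M \<Otimes>\<^sub>M M)) \<le> ennreal 1"
      using N1 W(1) by simp
    fix x' y'
    have "W x y \<le> W x' y' + C * infnorm (x - x') powr \<alpha> + C * infnorm (y - y') powr \<alpha>"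
      using holder_graphon_diff_le[OF H W(2), of x y x' y'] by linarith
    also have "\<dots> \<le> W x' y' + (C * infnorm x powr \<alpha> + C * infnorm x' powr \<alpha>)
        + (C * infnorm y powr \<alpha> + C * infnorm y' powr \<alpha>)"
      using C infnorm_diff_powr_le[OF \<alpha>]
      by (intro add_mono order_refl) (auto simp flip: distrib_left intro: mult_left_mono)
    finally show "W x y \<le> a + W (fst (x', y')) (snd (x', y')) + C * infnorm x' powr \<alpha> + C * infnorm y' powr \<alpha>"
      by (simp add: a_def)
  qed (use W(1,3) C A in \<open>auto simp: a_def\<close>)
  finally show ?thesis
    using C A by (subst (asm) ennreal_le_iff) (auto simp: a_def algebra_simps)
qed

lemma graphon_tail_le:
  fixes M :: "'a::euclidean_space measure" and W :: "'a \<Rightarrow> 'a \<Rightarrow> real"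
    and c C \<alpha> \<beta> p m \<rho> :: real
  assumes M: "prob_space M" and Mb: "sets M = sets borel" and G: "graphon M W"
    and Wb: "\<And>x y. W x y \<le> c + C * infnorm x powr \<alpha> + C * infnorm y powr \<alpha>"
    and C: "0 \<le> C" and c: "0 \<le> c" and \<alpha>: "0 < \<alpha>" and p: "0 < p" "p \<le> \<beta> / \<alpha>"
    and mom: "(\<integral>\<^sup>+ x. ennreal (infnorm x powr \<beta>) \<partial>M) \<le> ennreal m" "0 \<le> m"
    and \<rho>: "0 < \<rho>"
  shows "graphon_tail p \<rho> M W
    \<le> ennreal ((3 powr (\<beta>/\<alpha>) * (c powr (\<beta>/\<alpha>) + 2 * (C powr (\<beta>/\<alpha>) * m))) powr (1/p)
          * \<rho> powr (\<beta> / (p * \<alpha>) - 1))"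
proof -
  define q where "q = \<beta> / \<alpha>"
  define t where "t = \<rho> powr (q - p) * 3 powr q"
  define K where "K = 3 powr q * (c powr q + 2 * (C powr q * m))"
  have q: "0 \<le> q" "\<alpha> * q = \<beta>" using p \<alpha> by (auto simp: q_def)
  have t: "0 \<le> t" by (simp add: t_def)
  have W0: "\<And>a b. 0 \<le> W a b" using G by (auto simp: graphon_def)
  have pt: "\<bar>W x y - min (W x y) (1/\<rho>)\<bar> powr p
      \<le> t * c powr q + t * (C powr q * infnorm x powr \<beta>) + t * (C powr q * infnorm y powr \<beta>)"
    for x y
  proof -
    have "\<bar>W x y - min (W x y) (1/\<rho>)\<bar> powr p
        \<le> \<rho> powr (q - p) * (c + C * infnorm x powr \<alpha> + C * infnorm y powr \<alpha>) powr q"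
      using W0 Wb \<rho> p by (intro truncation_excess_powr_le) (auto simp: q_def)
    also have "\<dots> \<le> \<rho> powr (q - p)
        * (3 powr q * (c powr q + (C * infnorm x powr \<alpha>) powr q + (C * infnorm y powr \<alpha>) powr q))"
      using C c q by (intro mult_left_mono powr_add3_le_3_powr) auto
    also have "\<dots> = t * c powr q + t * (C powr q * infnorm x powr \<beta>) + t * (C powr q * infnorm y powr \<beta>)"
      using C q by (simp add: t_def powr_mult powr_powr algebra_simps)
    finally show ?thesis .
  qed
  have "(\<integral>\<^sup>+ z. ennreal (\<bar>W (fst z) (snd z) - min (W (fst z) (snd z)) (1/\<rho>)\<bar> powr p) \<partial>(M \<Otimes>\<^sub>M M))
      \<le> ennreal (t * c powr q + 0 + 2 * (t * (C powr q * m)))"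
  proof (rule nn_integral_pair_le[OF M, where h="\<lambda>_. 0"])
    show "(\<lambda>x. t * (C powr q * infnorm x powr \<beta>)) \<in> borel_measurable M"
      by (simp add: measurable_cong_sets[OF Mb refl])
    show "(\<integral>\<^sup>+ x. ennreal (t * (C powr q * infnorm x powr \<beta>)) \<partial>M) \<le> ennreal (t * (C powr q * m))"
      using mom t by (intro nn_integral_cmult_le) (simp_all add: measurable_cong_sets[OF Mb refl])
  qed (use pt t C mom in auto)
  also have "t * c powr q + 0 + 2 * (t * (C powr q * m)) = \<rho> powr (q - p) * K"
    by (simp add: t_def K_def algebra_simps)
  finally have I: "(\<integral>\<^sup>+ z. ennreal (\<bar>W (fst z) (snd z) - min (W (fst z) (snd z)) (1/\<rho>)\<bar> powr p)
      \<partial>(M \<Otimes>\<^sub>M M)) \<le> ennreal (\<rho> powr (q - p) * K)" .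
  have K: "0 \<le> K" using mom by (simp add: K_def)
  have "graphon_tail p \<rho> M W \<le> enn_root p (ennreal (\<rho> powr (q - p) * K))"
    unfolding graphon_tail_def graphon_norm_def using I p by (intro enn_root_mono) auto
  also have "\<dots> = ennreal (K powr (1/p) * \<rho> powr ((q - p) / p))"
    using K \<rho> by (simp add: enn_root_ennreal powr_mult powr_powr mult.commute)
  also have "(q - p) / p = \<beta> / (p * \<alpha>) - 1"
    using p by (simp add: q_def field_simps)
  finally show ?thesis by (simp add: K_def q_def)
qed

lemma holder_graphon_tail_le:
  fixes M :: "'a::euclidean_space measure" and W :: "'a \<Rightarrow> 'a \<Rightarrow> real"
    and C \<alpha> \<beta> p m \<rho> :: real
  assumes M: "prob_space M" and Mb: "sets M = sets borel" and G: "graphon M W"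
    and N1: "(\<integral>\<^sup>+ z. ennreal \<bar>W (fst z) (snd z)\<bar> \<partial>(M \<Otimes>\<^sub>M M)) = 1"
    and H: "\<forall>x x' y. \<bar>W x y - W x' y\<bar> \<le> C * infnorm (x - x') powr \<alpha>"
    and C: "0 \<le> C" and \<alpha>: "0 < \<alpha>" "\<alpha> \<le> 1" "\<alpha> \<le> \<beta>" and p: "0 < p" "p \<le> \<beta> / \<alpha>"
    and mom: "(\<integral>\<^sup>+ x. ennreal (infnorm x powr \<beta>) \<partial>M) \<le> ennreal m" "0 \<le> m"
    and \<rho>: "0 < \<rho>"
  shows "graphon_tail p \<rho> M W
    \<le> ennreal ((3 powr (\<beta>/\<alpha>) * ((1 + 2 * (C * (1 + m))) powr (\<beta>/\<alpha>) + 2 * (C powr (\<beta>/\<alpha>) * m)))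
          powr (1/p) * \<rho> powr (\<beta> / (p * \<alpha>) - 1))"
proof (rule graphon_tail_le[OF M Mb G _ C _ \<alpha>(1) p mom \<rho>])
  have "(\<integral>\<^sup>+ x. ennreal (infnorm x powr \<alpha>) \<partial>M) \<le> ennreal (1 + m)"
    using M \<alpha> mom
    by (intro nn_integral_powr_le_one_plus) (auto simp: infnorm_pos_le measurable_cong_sets[OF Mb refl])
  from holder_graphon_le[OF M Mb G N1 H C \<alpha>(1,2) this]
  show "W x y \<le> 1 + 2 * (C * (1 + m)) + C * infnorm x powr \<alpha> + C * infnorm y powr \<alpha>" for x y
    using mom by simp
qed (use C mom in auto)

section \<open>Block models from labellings\<close>

lemma simple_function_enumerate:
  fixes lab :: "'a \<Rightarrow> 'b" and \<kappa> :: real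
  assumes M: "prob_space M" and lab: "simple_function M lab"
    and heavy: "\<And>l. l \<in> lab ` space M \<Longrightarrow> \<kappa> \<le> measure M (lab -` {l} \<inter> space M)"
  obtains k :: nat and f :: "'a \<Rightarrow> nat" and r :: "nat \<Rightarrow> 'b" where "1 \<le> k" "f \<in> M \<rightarrow>\<^sub>M count_space {..<k}"
    "\<And>i. i < k \<Longrightarrow> \<kappa> \<le> measure M (f -` {i} \<inter> space M)"
    "\<And>x. x \<in> space M \<Longrightarrow> r (f x) = lab x"
proof -
  interpret prob_space M by fact
  define L where "L = lab ` space M"
  define k where "k = card L"
  define r where "r = inv_into L (to_nat_on L)"
  define f where "f x = to_nat_on L (lab x)" for x
  have L: "finite L" "L \<noteq> {}"
    using lab not_empty by (auto simp: L_def simple_function_def)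
  have bij: "bij_betw (to_nat_on L) L {..<k}"
    unfolding k_def by (rule to_nat_on_finite[OF L(1)])
  have r: "r i \<in> L" "to_nat_on L (r i) = i" if "i < k" for i
    using bij that unfolding r_def by (auto intro: inv_into_into f_inv_into_f simp: bij_betw_def)
  have rf: "r (f x) = lab x" if "x \<in> space M" for x
    using bij that unfolding r_def f_def L_def by (auto intro: inv_into_f_f simp: bij_betw_def)
  have level: "f -` {i} \<inter> space M = lab -` {r i} \<inter> space M" if "i < k" for i
    using rf r[OF that] by (auto simp: f_def)
  show ?thesis
  proof (rule that[of k f r])
    show "1 \<le> k" using L by (simp add: k_def Suc_le_eq card_gt_0_iff)
    show "f \<in> M \<rightarrow>\<^sub>M count_space {..<k}"
      unfolding measurable_count_space_eq2[OF finite_lessThan]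
      using bij_betw_apply[OF bij] level simple_functionD(2)[OF lab] by (auto simp: f_def L_def)
    show "\<kappa> \<le> measure M (f -` {i} \<inter> space M)" if "i < k" for i
      using heavy r[OF that] level[OF that] by (simp add: L_def)
  qed (fact rf)
qed

lemma nn_integral_graph_coupling:
  assumes M: "prob_space M" and f: "f \<in> M \<rightarrow>\<^sub>M N"
    and F: "F \<in> borel_measurable ((M \<Otimes>\<^sub>M N) \<Otimes>\<^sub>M (M \<Otimes>\<^sub>M N))"
  defines "\<nu> \<equiv> distr M (M \<Otimes>\<^sub>M N) (\<lambda>x. (x, f x))"
  shows "(\<integral>\<^sup>+ z. F z \<partial>(\<nu> \<Otimes>\<^sub>M \<nu>))
    = (\<integral>\<^sup>+ z. F ((fst z, f (fst z)), (snd z, f (snd z))) \<partial>(M \<Otimes>\<^sub>M M))"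
proof -
  have \<phi>: "(\<lambda>x. (x, f x)) \<in> M \<rightarrow>\<^sub>M M \<Otimes>\<^sub>M N" using f by measurable
  have "sigma_finite_measure \<nu>"
    unfolding \<nu>_def by (intro prob_space_imp_sigma_finite prob_space.prob_space_distr[OF M \<phi>])
  hence eq: "\<nu> \<Otimes>\<^sub>M \<nu> = distr (M \<Otimes>\<^sub>M M) ((M \<Otimes>\<^sub>M N) \<Otimes>\<^sub>M (M \<Otimes>\<^sub>M N)) (\<lambda>(x, y). ((x, f x), (y, f y)))"
    unfolding \<nu>_def by (rule pair_measure_distr[OF \<phi> \<phi>])
  have pm: "(\<lambda>(x, y). ((x, f x), (y, f y))) \<in> M \<Otimes>\<^sub>M M \<rightarrow>\<^sub>M (M \<Otimes>\<^sub>M N) \<Otimes>\<^sub>M (M \<Otimes>\<^sub>M N)"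
    using f by measurable
  have "F \<in> borel_measurable (distr (M \<Otimes>\<^sub>M M) ((M \<Otimes>\<^sub>M N) \<Otimes>\<^sub>M (M \<Otimes>\<^sub>M N))
      (\<lambda>(x, y). ((x, f x), (y, f y))))"
    using F by simp
  then show ?thesis
    unfolding eq by (subst nn_integral_distr[OF pm]) (simp_all add: case_prod_beta)
qed

lemma coupling_graph:
  assumes M: "prob_space M" and f: "f \<in> M \<rightarrow>\<^sub>M count_space {..<k}"
  defines "q \<equiv> \<lambda>i. measure M (f -` {i} \<inter> space M)"
  shows "coupling M (block_measure k q) (distr M (M \<Otimes>\<^sub>M block_measure k q) (\<lambda>x. (x, f x)))"
  unfolding coupling_def
proof (intro conjI ballI)
  interpret prob_space M by fact
  let ?B = "block_measure k q"
  have B: "space ?B = {..<k}" "sets ?B = Pow {..<k}"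
    by (simp_all add: block_measure_def point_measure_def)
  have "f \<in> M \<rightarrow>\<^sub>M ?B"
    using f measurable_cong_sets[of M M ?B "count_space {..<k}"] B by simp
  hence \<phi>: "(\<lambda>x. (x, f x)) \<in> M \<rightarrow>\<^sub>M M \<Otimes>\<^sub>M ?B" by measurable
  have fk: "f x < k" if "x \<in> space M" for x using measurable_space[OF f that] by simp
  show "sets (distr M (M \<Otimes>\<^sub>M ?B) (\<lambda>x. (x, f x))) = sets (M \<Otimes>\<^sub>M ?B)" by simp
  show "emeasure (distr M (M \<Otimes>\<^sub>M ?B) (\<lambda>x. (x, f x))) (A \<times> space ?B) = emeasure M A"
    if A: "A \<in> sets M" for A
  proof -
    have "(\<lambda>x. (x, f x)) -` (A \<times> space ?B) \<inter> space M = A"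
      using sets.sets_into_space[OF A] fk B by auto
    then show ?thesis using A by (simp add: emeasure_distr[OF \<phi>])
  qed
  show "emeasure (distr M (M \<Otimes>\<^sub>M ?B) (\<lambda>x. (x, f x))) (space M \<times> S) = emeasure ?B S"
    if S: "S \<in> sets ?B" for S
  proof -
    have S': "S \<subseteq> {..<k}" "finite S" using S B by (auto intro: finite_subset)
    have level: "f -` {i} \<inter> space M \<in> sets M" if "i < k" for i
      using measurable_sets[OF f, of "{i}"] that by simp
    have "emeasure ?B S = (\<Sum>i\<in>S. emeasure M (f -` {i} \<inter> space M))"
      using S' by (simp add: block_measure_def emeasure_point_measure_finite q_def emeasure_eq_measure)
    also have "\<dots> = emeasure M (\<Union>i\<in>S. f -` {i} \<inter> space M)"
      using S' level by (intro sum_emeasure) (auto simp: disjoint_family_on_def)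
    also have "(\<Union>i\<in>S. f -` {i} \<inter> space M) = (\<lambda>x. (x, f x)) -` (space M \<times> S) \<inter> space M"
      by auto
    finally have "emeasure ?B S = emeasure M ((\<lambda>x. (x, f x)) -` (space M \<times> S) \<inter> space M)" .
    moreover have "space M \<times> S \<in> sets (M \<Otimes>\<^sub>M ?B)" using S by auto
    ultimately show ?thesis by (simp add: emeasure_distr[OF \<phi>])
  qed
qed

lemma borel_measurable_block_entry:
  fixes B :: "nat \<Rightarrow> nat \<Rightarrow> real"
  shows "(\<lambda>z. B (snd (fst z)) (snd (snd z)))
    \<in> borel_measurable ((M \<Otimes>\<^sub>M block_measure k q) \<Otimes>\<^sub>M (N \<Otimes>\<^sub>M block_measure k q))"
    (is "_ \<in> borel_measurable ?P")
proof -
  have sB: "sets (block_measure k q) = sets (count_space {..<k})"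
    by (simp add: block_measure_def point_measure_def)
  have "(\<lambda>z. snd (fst z)) \<in> ?P \<rightarrow>\<^sub>M block_measure k q" "(\<lambda>z. snd (snd z)) \<in> ?P \<rightarrow>\<^sub>M block_measure k q"
    by measurable
  hence idx: "(\<lambda>z. snd (fst z)) \<in> ?P \<rightarrow>\<^sub>M count_space {..<k}"
    "(\<lambda>z. snd (snd z)) \<in> ?P \<rightarrow>\<^sub>M count_space {..<k}"
    by (simp_all add: measurable_cong_sets[OF refl sB])
  show ?thesis
  proof (rule measurable_compose_countable'[where f="\<lambda>i z. B i (snd (snd z))" and I="{..<k}", OF _ idx(1)])
    show "(\<lambda>z. B i (snd (snd z))) \<in> borel_measurable ?P" for i
      by (rule measurable_compose_countable'[where f="\<lambda>j z. B i j" and I="{..<k}", OF _ idx(2)]) auto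
  qed auto
qed

lemma block_model_ge_partition:
  fixes W :: "'a \<Rightarrow> 'a \<Rightarrow> real" and r :: "nat \<Rightarrow> 'a" and \<kappa> :: real
  assumes M: "prob_space M" and G: "graphon M W" and k: "1 \<le> k"
    and f: "f \<in> M \<rightarrow>\<^sub>M count_space {..<k}"
    and mass: "\<And>i. i < k \<Longrightarrow> \<kappa> \<le> measure M (f -` {i} \<inter> space M)"
  shows "block_model_ge \<kappa> k (\<lambda>i. measure M (f -` {i} \<inter> space M)) (\<lambda>i j. W (r i) (r j))"
proof -
  interpret prob_space M by fact
  have level: "f -` {i} \<inter> space M \<in> sets M" if "i < k" for i
    using measurable_sets[OF f, of "{i}"] that by simp
  have "(\<Sum>i<k. measure M (f -` {i} \<inter> space M)) = measure M (\<Union>i<k. f -` {i} \<inter> space M)"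
    using level by (subst finite_measure_finite_Union) (auto simp: disjoint_family_on_def)
  also have "(\<Union>i<k. f -` {i} \<inter> space M) = space M"
    using measurable_space[OF f] by auto
  finally show ?thesis
    using k mass G by (auto simp: block_model_ge_def graphon_def prob_space)
qed

lemma delta_p_le_partition:
  fixes W :: "'a \<Rightarrow> 'a \<Rightarrow> real" and r :: "nat \<Rightarrow> 'a" and p :: real
  assumes M: "prob_space M" and G: "graphon M W" and p: "0 < p"
    and f: "f \<in> M \<rightarrow>\<^sub>M count_space {..<k}"
  defines "q \<equiv> \<lambda>i. measure M (f -` {i} \<inter> space M)"
  shows "delta_p p M W (block_measure k q) (\<lambda>i j. W (r i) (r j)) \<le> enn_root p
    (\<integral>\<^sup>+ z. ennreal (\<bar>W (fst z) (snd z) - W (r (f (fst z))) (r (f (snd z)))\<bar> powr p) \<partial>(M \<Otimes>\<^sub>M M))"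
proof -
  define B where "B i j = W (r i) (r j)" for i j
  define \<nu> where "\<nu> = distr M (M \<Otimes>\<^sub>M block_measure k q) (\<lambda>x. (x, f x))"
  let ?P = "(M \<Otimes>\<^sub>M block_measure k q) \<Otimes>\<^sub>M (M \<Otimes>\<^sub>M block_measure k q)"
  have Wm: "(\<lambda>z. W (fst z) (snd z)) \<in> borel_measurable (M \<Otimes>\<^sub>M M)"
    using G by (simp add: graphon_def)
  have "(\<lambda>z. (fst (fst z), fst (snd z))) \<in> ?P \<rightarrow>\<^sub>M M \<Otimes>\<^sub>M M"
    by measurable
  from measurable_compose[OF this Wm]
  have "(\<lambda>z. W (fst (fst z)) (fst (snd z))) \<in> borel_measurable ?P"
    by simp
  with borel_measurable_block_entry[of B]
  have F: "(\<lambda>z. ennreal (\<bar>W (fst (fst z)) (fst (snd z)) - B (snd (fst z)) (snd (snd z))\<bar> powr p))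
      \<in> borel_measurable ?P"
    by measurable
  have fB: "f \<in> M \<rightarrow>\<^sub>M block_measure k q"
    using f by (simp add: block_measure_def point_measure_def measurable_cong_sets)
  have "delta_p p M W (block_measure k q) B \<le> enn_root p (\<integral>\<^sup>+ z. ennreal (\<bar>W (fst (fst z)) (fst (snd z))
      - B (snd (fst z)) (snd (snd z))\<bar> powr p) \<partial>(\<nu> \<Otimes>\<^sub>M \<nu>))"
    unfolding delta_p_def \<nu>_def q_def using coupling_graph[OF M f] p
    by (intro enn_root_mono INF_lower) auto
  also have "(\<integral>\<^sup>+ z. ennreal (\<bar>W (fst (fst z)) (fst (snd z)) - B (snd (fst z)) (snd (snd z))\<bar> powr p)
      \<partial>(\<nu> \<Otimes>\<^sub>M \<nu>))
    = (\<integral>\<^sup>+ z. ennreal (\<bar>W (fst z) (snd z) - W (r (f (fst z))) (r (f (snd z)))\<bar> powr p) \<partial>(M \<Otimes>\<^sub>M M))"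
    unfolding \<nu>_def nn_integral_graph_coupling[OF M fB F] by (simp add: B_def)
  finally show ?thesis by (simp add: B_def)
qed

lemma eps_block_le_labelling:
  fixes W :: "'a \<Rightarrow> 'a \<Rightarrow> real" and lab :: "'a \<Rightarrow> 'a" and p \<kappa> :: real
  assumes M: "prob_space M" and G: "graphon M W" and p: "0 < p"
    and lab: "simple_function M lab"
    and heavy: "\<And>l. l \<in> lab ` space M \<Longrightarrow> \<kappa> \<le> measure M (lab -` {l} \<inter> space M)"
  shows "eps_block p \<kappa> M W \<le> enn_root p
    (\<integral>\<^sup>+ z. ennreal (\<bar>W (fst z) (snd z) - W (lab (fst z)) (lab (snd z))\<bar> powr p) \<partial>(M \<Otimes>\<^sub>M M))"
proof -
  obtain k :: nat and f :: "'a \<Rightarrow> nat" and r :: "nat \<Rightarrow> 'a" where k: "1 \<le> k"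
    and f: "f \<in> M \<rightarrow>\<^sub>M count_space {..<k}"
    and mass: "\<And>i. i < k \<Longrightarrow> \<kappa> \<le> measure M (f -` {i} \<inter> space M)"
    and rf: "\<And>x. x \<in> space M \<Longrightarrow> r (f x) = lab x"
    using M lab heavy simple_function_enumerate by metis
  have "eps_block p \<kappa> M W
      \<le> delta_p p M W (block_measure k (\<lambda>i. measure M (f -` {i} \<inter> space M))) (\<lambda>i j. W (r i) (r j))"
    unfolding eps_block_def using block_model_ge_partition[OF M G k f mass]
    by (intro INF_lower2[of "(k, \<lambda>i. measure M (f -` {i} \<inter> space M), \<lambda>i j. W (r i) (r j))"]) auto
  also have "\<dots> \<le> enn_root p
      (\<integral>\<^sup>+ z. ennreal (\<bar>W (fst z) (snd z) - W (r (f (fst z))) (r (f (snd z)))\<bar> powr p) \<partial>(M \<Otimes>\<^sub>M M))"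
    by (rule delta_p_le_partition[OF M G p f])
  also have "(\<integral>\<^sup>+ z. ennreal (\<bar>W (fst z) (snd z) - W (r (f (fst z))) (r (f (snd z)))\<bar> powr p) \<partial>(M \<Otimes>\<^sub>M M))
    = (\<integral>\<^sup>+ z. ennreal (\<bar>W (fst z) (snd z) - W (lab (fst z)) (lab (snd z))\<bar> powr p) \<partial>(M \<Otimes>\<^sub>M M))"
    using rf by (intro nn_integral_cong) (auto simp: space_pair_measure)
  finally show ?thesis .
qed

lemma eps_block_le_quantization_error:
  fixes M :: "'a::euclidean_space measure" and W :: "'a \<Rightarrow> 'a \<Rightarrow> real" and lab :: "'a \<Rightarrow> 'a"
    and C \<alpha> p \<kappa> Q :: real
  assumes M: "prob_space M" and Mb: "sets M = sets borel" and G: "graphon M W"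
    and H: "\<forall>x x' y. \<bar>W x y - W x' y\<bar> \<le> C * infnorm (x - x') powr \<alpha>"
    and C: "0 \<le> C" and p: "0 < p"
    and lab: "simple_function M lab"
    and heavy: "\<And>l. l \<in> lab ` space M \<Longrightarrow> \<kappa> \<le> measure M (lab -` {l} \<inter> space M)"
    and Q: "(\<integral>\<^sup>+ x. ennreal (infnorm (x - lab x) powr (\<alpha> * p)) \<partial>M) \<le> ennreal Q" "0 \<le> Q"
  shows "eps_block p \<kappa> M W \<le> ennreal ((2 * ((2 * C) powr p * Q)) powr (1/p))"
proof -
  define g where "g x = (2 * C) powr p * infnorm (x - lab x) powr (\<alpha> * p)" for x
  have sym: "\<And>x y. W x y = W y x" using G by (simp add: graphon_def)
  have pt: "\<bar>W x y - W (lab x) (lab y)\<bar> powr p \<le> g x + g y" for x y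
  proof -
    have "\<bar>W x y - W (lab x) (lab y)\<bar> powr p
        \<le> (C * infnorm (x - lab x) powr \<alpha> + C * infnorm (y - lab y) powr \<alpha>) powr p"
      using holder_graphon_diff_le[OF H sym] p by (intro powr_mono2) auto
    also have "\<dots> \<le> 2 powr p * ((C * infnorm (x - lab x) powr \<alpha>) powr p
        + (C * infnorm (y - lab y) powr \<alpha>) powr p)"
      using C p by (intro powr_add_le_2_powr) auto
    also have "\<dots> = g x + g y"
      using C by (simp add: g_def powr_mult powr_powr algebra_simps)
    finally show ?thesis .
  qed
  have "lab \<in> borel_measurable M" "(\<lambda>x. x) \<in> borel_measurable M"
    by (rule borel_measurable_simple_function[OF lab], rule measurable_ident_sets[OF Mb])
  hence dm: "(\<lambda>x. infnorm (x - lab x) powr (\<alpha> * p)) \<in> borel_measurable M" by measurable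
  hence gm: "g \<in> borel_measurable M" unfolding g_def by measurable
  have "(\<integral>\<^sup>+ z. ennreal (\<bar>W (fst z) (snd z) - W (lab (fst z)) (lab (snd z))\<bar> powr p) \<partial>(M \<Otimes>\<^sub>M M))
      \<le> ennreal (0 + 0 + 2 * ((2 * C) powr p * Q))"
  proof (rule nn_integral_pair_le[OF M gm, where h="\<lambda>_. 0"])
    show "(\<integral>\<^sup>+ x. ennreal (g x) \<partial>M) \<le> ennreal ((2 * C) powr p * Q)"
      unfolding g_def using Q
      by (intro nn_integral_cmult_le dm) auto
  qed (use pt Q in \<open>auto simp: g_def\<close>)
  hence "enn_root p (\<integral>\<^sup>+ z. ennreal (\<bar>W (fst z) (snd z) - W (lab (fst z)) (lab (snd z))\<bar> powr p)
      \<partial>(M \<Otimes>\<^sub>M M)) \<le> ennreal ((2 * ((2 * C) powr p * Q)) powr (1/p))"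
    using p Q by (subst enn_root_ennreal[symmetric]) (auto intro: enn_root_mono)
  with eps_block_le_labelling[OF M G p lab heavy] show ?thesis by (rule order_trans)
qed

section \<open>Grid quantization\<close>

definition grid :: "real \<Rightarrow> 'a::euclidean_space \<Rightarrow> 'a" where
  "grid h x = (\<Sum>b\<in>Basis. (h * of_int \<lfloor>(x \<bullet> b) / h\<rfloor>) *\<^sub>R b)"

lemma grid_inner: "b \<in> Basis \<Longrightarrow> grid h x \<bullet> b = h * of_int \<lfloor>(x \<bullet> b) / h\<rfloor>"
  unfolding grid_def by (simp add: inner_sum_left inner_Basis if_distrib sum.delta cong: if_cong)

lemma borel_measurable_grid[measurable]: "grid h \<in> borel_measurable borel"
  unfolding grid_def by measurable

lemma infnorm_diff_grid_le:
  assumes "0 < h"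
  shows "infnorm (x - grid h x) \<le> h"
  unfolding infnorm_Max
proof (subst Max_le_iff, safe)
  fix b :: 'a assume b: "b \<in> Basis"
  have "h * of_int \<lfloor>(x \<bullet> b) / h\<rfloor> \<le> h * ((x \<bullet> b) / h)"
    "h * ((x \<bullet> b) / h) < h * (of_int \<lfloor>(x \<bullet> b) / h\<rfloor> + 1)"
    using assms by (intro mult_left_mono mult_strict_left_mono; linarith)+
  then show "\<bar>(x - grid h x) \<bullet> b\<bar> \<le> h"
    using assms b by (simp add: inner_diff_left grid_inner algebra_simps abs_le_iff)
qed auto

lemma infnorm_grid_le:
  assumes "0 < h"
  shows "infnorm (grid h x) \<le> infnorm x + h"
proof -
  have "infnorm (grid h x) \<le> infnorm x + infnorm (grid h x - x)"
    using infnorm_triangle[of x "grid h x - x"] by simp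
  also have "infnorm (grid h x - x) \<le> h"
    using infnorm_diff_grid_le[OF assms, of x] by (simp only: infnorm_sub)
  finally show ?thesis by simp
qed

lemma grid_image_subset:
  assumes "0 < h"
  shows "grid h ` {x::'a::euclidean_space. infnorm x \<le> R}
    \<subseteq> (\<lambda>j. \<Sum>b\<in>Basis. (h * of_int (j b)) *\<^sub>R b) ` (Basis \<rightarrow>\<^sub>E {-\<lceil>R/h\<rceil>..\<lceil>R/h\<rceil>})"
proof safe
  fix x :: 'a assume x: "infnorm x \<le> R"
  define j where "j = restrict (\<lambda>b. \<lfloor>(x \<bullet> b) / h\<rfloor>) Basis"
  have "j \<in> Basis \<rightarrow>\<^sub>E {-\<lceil>R/h\<rceil>..\<lceil>R/h\<rceil>}"
    unfolding j_def
  proof (subst restrict_PiE, rule Pi_I)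
    fix b :: 'a assume b: "b \<in> Basis"
    have "\<bar>x \<bullet> b\<bar> \<le> R" using Basis_le_infnorm[OF b, of x] x by linarith
    hence "-(R/h) \<le> (x \<bullet> b)/h" "(x \<bullet> b)/h \<le> R/h"
      using assms by (auto simp: abs_le_iff field_simps)
    hence "- \<lceil>R/h\<rceil> \<le> \<lfloor>(x \<bullet> b)/h\<rfloor>" "\<lfloor>(x \<bullet> b)/h\<rfloor> \<le> \<lceil>R/h\<rceil>"
      using floor_mono[of "-(R/h)" "(x \<bullet> b)/h"]
        order_trans[OF floor_mono[of "(x \<bullet> b)/h" "R/h"] floor_le_ceiling]
      by (auto simp: floor_minus)
    then show "\<lfloor>(x \<bullet> b)/h\<rfloor> \<in> {-\<lceil>R/h\<rceil>..\<lceil>R/h\<rceil>}" by simp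
  qed
  moreover have "grid h x = (\<Sum>b\<in>Basis. (h * of_int (j b)) *\<^sub>R b)"
    unfolding grid_def j_def by (rule sum.cong) auto
  ultimately show "grid h x \<in> (\<lambda>j. \<Sum>b\<in>Basis. (h * of_int (j b)) *\<^sub>R b) ` (Basis \<rightarrow>\<^sub>E {-\<lceil>R/h\<rceil>..\<lceil>R/h\<rceil>})"
    by blast
qed

lemma finite_grid_image:
  assumes "0 < h"
  shows "finite (grid h ` {x::'a::euclidean_space. infnorm x \<le> R})"
  by (rule finite_subset[OF grid_image_subset[OF assms]], rule finite_imageI, rule finite_PiE) simp_all

lemma card_grid_image_le:
  assumes "0 < h" "h \<le> R"
  shows "real (card (grid h ` {x::'a::euclidean_space. infnorm x \<le> R})) \<le> (5 * R / h) ^ DIM('a)"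
proof -
  have fin: "finite ((Basis :: 'a set) \<rightarrow>\<^sub>E {-\<lceil>R/h\<rceil>..\<lceil>R/h\<rceil>})"
    by (simp add: finite_PiE)
  have "card (grid h ` {x::'a. infnorm x \<le> R})
      \<le> card ((\<lambda>j. \<Sum>b\<in>Basis. (h * of_int (j b)) *\<^sub>R b :: 'a) ` (Basis \<rightarrow>\<^sub>E {-\<lceil>R/h\<rceil>..\<lceil>R/h\<rceil>}))"
    by (intro card_mono finite_imageI fin grid_image_subset assms(1))
  also have "\<dots> \<le> card ((Basis :: 'a set) \<rightarrow>\<^sub>E {-\<lceil>R/h\<rceil>..\<lceil>R/h\<rceil>})"
    by (rule card_image_le[OF fin])
  also have "\<dots> = nat (2 * \<lceil>R/h\<rceil> + 1) ^ DIM('a)"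
    by (simp add: card_PiE)
  finally have "real (card (grid h ` {x::'a. infnorm x \<le> R})) \<le> real (nat (2 * \<lceil>R/h\<rceil> + 1)) ^ DIM('a)"
    by (simp only: of_nat_power[symmetric] of_nat_le_iff)
  also have "\<dots> \<le> (5 * R / h) ^ DIM('a)"
  proof (rule power_mono)
    have "1 \<le> R / h" using assms by simp
    moreover have "of_int \<lceil>R/h\<rceil> < R / h + 1" by linarith
    moreover have "0 \<le> 2 * \<lceil>R/h\<rceil> + 1" using calculation(1) by linarith
    ultimately show "real (nat (2 * \<lceil>R/h\<rceil> + 1)) \<le> 5 * R / h"
      by (simp only: of_nat_nat)
  qed simp
  finally show ?thesis .
qed

definition merged_grid_label :: "real \<Rightarrow> real \<Rightarrow> 'a set \<Rightarrow> 'a \<Rightarrow> 'a \<Rightarrow> 'a::euclidean_space" where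
  "merged_grid_label h R H l0 x = (if infnorm x \<le> R \<and> grid h x \<in> H then grid h x else l0)"

lemma simple_function_merged_grid_label:
  assumes "sets M = sets borel" "finite H"
  shows "simple_function M (merged_grid_label h R H l0)"
proof (rule simple_function_borel_measurable)
  have "H \<in> sets borel" using assms(2) by (simp add: borel_closed finite_imp_closed)
  hence "merged_grid_label h R H l0 \<in> borel_measurable borel"
    unfolding merged_grid_label_def by measurable
  then show "merged_grid_label h R H l0 \<in> borel_measurable M"
    by (simp add: measurable_cong_sets[OF assms(1) refl])
  have "merged_grid_label h R H l0 ` space M \<subseteq> insert l0 H"
    by (auto simp: merged_grid_label_def)
  then show "finite (merged_grid_label h R H l0 ` space M)"
    using assms(2) by (rule finite_subset[OF _ finite_insert[THEN iffD2]])
qed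

text \<open>Away from the box the label may be far from \<open>x\<close>, but only by \<open>3 |x|\<close>; this is paid for by the
  moment of order \<open>\<beta>\<close>.\<close>
lemma infnorm_diff_merged_grid_label_le:
  fixes x l0 :: "'a::euclidean_space" and h R s \<beta> :: real
  assumes h: "0 < h" "h \<le> R" and l0: "infnorm l0 \<le> 2 * R" and s: "0 \<le> s" "s \<le> \<beta>"
  shows "infnorm (x - merged_grid_label h R H l0 x) powr s
    \<le> h powr s + (3 * R) powr s * indicator {x. infnorm x \<le> R \<and> grid h x \<notin> H} x
       + 3 powr s * R powr (s - \<beta>) * infnorm x powr \<beta>"
proof -
  have far: "infnorm (x - l0) \<le> infnorm x + 2 * R"
    using infnorm_triangle[of x "- l0"] l0 by (simp add: infnorm_neg)
  consider (good) "infnorm x \<le> R" "grid h x \<in> H" | (light) "infnorm x \<le> R" "grid h x \<notin> H"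
    | (outside) "R < infnorm x" by fastforce
  then show ?thesis
  proof cases
    case good
    hence "infnorm (x - merged_grid_label h R H l0 x) powr s \<le> h powr s"
      using infnorm_diff_grid_le[OF h(1), of x] s
      by (simp add: merged_grid_label_def infnorm_pos_le powr_mono2)
    then show ?thesis by (simp add: add_increasing2)
  next
    case light
    hence "infnorm (x - merged_grid_label h R H l0 x) powr s \<le> (3 * R) powr s"
      using far s by (auto simp: merged_grid_label_def infnorm_pos_le intro!: powr_mono2)
    then show ?thesis using light by (simp add: add_increasing add_increasing2)
  next
    case outside
    hence "infnorm (x - merged_grid_label h R H l0 x) powr s \<le> (3 * infnorm x) powr s"
      using far s by (auto simp: merged_grid_label_def infnorm_pos_le intro!: powr_mono2)
    also have "\<dots> \<le> 3 powr s * (R powr (s - \<beta>) * infnorm x powr \<beta>)"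
      using outside h s powr_le_powr_diff_mult_powr[of R "infnorm x" s \<beta>]
      by (simp add: powr_mult infnorm_pos_le)
    finally show ?thesis using outside h by (simp add: add_increasing mult.assoc)
  qed
qed

definition grid_cell :: "real \<Rightarrow> real \<Rightarrow> 'a \<Rightarrow> 'a::euclidean_space set" where
  "grid_cell h R l = {x. infnorm x \<le> R \<and> grid h x = l}"

definition heavy_grid_cells :: "'a measure \<Rightarrow> real \<Rightarrow> real \<Rightarrow> real \<Rightarrow> 'a::euclidean_space set" where
  "heavy_grid_cells M \<kappa> h R = {l \<in> grid h ` {x. infnorm x \<le> R}. \<kappa> \<le> measure M (grid_cell h R l)}"

lemma finite_heavy_grid_cells: "0 < h \<Longrightarrow> finite (heavy_grid_cells M \<kappa> h R)"
  unfolding heavy_grid_cells_def by (rule finite_subset[OF _ finite_grid_image]) auto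

lemma emeasure_light_grid_cells_le:
  fixes M :: "'a::euclidean_space measure" and \<kappa> h R :: real
  assumes M: "finite_measure M" and Mb: "sets M = sets borel" and h: "0 < h" and \<kappa>: "0 \<le> \<kappa>"
  shows "emeasure M {x. infnorm x \<le> R \<and> grid h x \<notin> heavy_grid_cells M \<kappa> h R}
    \<le> ennreal (real (card (grid h ` {x::'a. infnorm x \<le> R})) * \<kappa>)"
proof -
  interpret finite_measure M by fact
  define L where "L = grid h ` {x::'a. infnorm x \<le> R}"
  have L: "finite L" unfolding L_def by (rule finite_grid_image[OF h])
  have cell: "grid_cell h R l \<in> sets M" for l
    using Mb unfolding grid_cell_def by measurable
  have "{x. infnorm x \<le> R \<and> grid h x \<notin> heavy_grid_cells M \<kappa> h R}
      = (\<Union>l\<in>L - heavy_grid_cells M \<kappa> h R. grid_cell h R l)"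
    by (auto simp: grid_cell_def heavy_grid_cells_def L_def)
  also have "emeasure M \<dots> \<le> ennreal (real (card (L - heavy_grid_cells M \<kappa> h R)) * \<kappa>)"
    using L cell \<kappa>
    by (intro emeasure_UN_le_card_mult) (auto simp: heavy_grid_cells_def L_def emeasure_eq_measure)
  also have "\<dots> \<le> ennreal (real (card L) * \<kappa>)"
    using L \<kappa> by (intro ennreal_leI mult_right_mono) (auto intro: card_mono)
  finally show ?thesis by (simp add: L_def)
qed

text \<open>The default label \<open>l0\<close> is only used for a class of its own when no cell is heavy, and then
  that class is the whole space.\<close>
lemma measure_merged_grid_label_ge:
  fixes M :: "'a::euclidean_space measure" and \<kappa> h R :: real
  assumes M: "prob_space M" and Mb: "sets M = sets borel" and h: "0 < h" and \<kappa>: "\<kappa> \<le> 1"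
    and l0: "heavy_grid_cells M \<kappa> h R \<noteq> {} \<Longrightarrow> l0 \<in> heavy_grid_cells M \<kappa> h R"
  defines "lab \<equiv> merged_grid_label h R (heavy_grid_cells M \<kappa> h R) l0"
  assumes l: "l \<in> lab ` space M"
  shows "\<kappa> \<le> measure M (lab -` {l} \<inter> space M)"
proof (cases "l \<in> heavy_grid_cells M \<kappa> h R")
  case True
  interpret prob_space M by fact
  have "grid_cell h R l \<subseteq> lab -` {l} \<inter> space M"
    using True sets_eq_imp_space_eq[OF Mb]
    by (auto simp: grid_cell_def lab_def merged_grid_label_def)
  hence "measure M (grid_cell h R l) \<le> measure M (lab -` {l} \<inter> space M)"
    using simple_functionD(2)[OF simple_function_merged_grid_label[OF Mb finite_heavy_grid_cells[OF h]]]
    by (intro finite_measure_mono) (auto simp: lab_def)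
  then show ?thesis using True by (simp add: heavy_grid_cells_def)
next
  case False
  hence "heavy_grid_cells M \<kappa> h R = {}"
    using l l0 by (auto simp: lab_def merged_grid_label_def split: if_splits)
  hence "lab -` {l} \<inter> space M = space M"
    using l by (auto simp: lab_def merged_grid_label_def)
  then show ?thesis using \<kappa> M by (simp add: prob_space.prob_space)
qed

lemma grid_quantization:
  fixes M :: "'a::euclidean_space measure" and \<kappa> h R s \<beta> m :: real
  assumes M: "prob_space M" and Mb: "sets M = sets borel"
    and \<kappa>: "0 < \<kappa>" "\<kappa> \<le> 1" and h: "0 < h" "h \<le> R" and s: "0 \<le> s" "s \<le> \<beta>"
    and mom: "(\<integral>\<^sup>+ x. ennreal (infnorm x powr \<beta>) \<partial>M) \<le> ennreal m" "0 \<le> m"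
  obtains lab :: "'a \<Rightarrow> 'a" where "simple_function M lab"
    "\<And>l. l \<in> lab ` space M \<Longrightarrow> \<kappa> \<le> measure M (lab -` {l} \<inter> space M)"
    "(\<integral>\<^sup>+ x. ennreal (infnorm (x - lab x) powr s) \<partial>M)
      \<le> ennreal (h powr s + (3 * R) powr s * (real (card (grid h ` {x::'a. infnorm x \<le> R})) * \<kappa>)
         + 3 powr s * R powr (s - \<beta>) * m)"
proof -
  define H where "H = heavy_grid_cells M \<kappa> h R"
  define l0 where "l0 = (if H = {} then 0 else SOME l. l \<in> H)"
  have H: "finite H" unfolding H_def by (rule finite_heavy_grid_cells[OF h(1)])
  hence "H \<in> sets borel" by (simp add: borel_closed finite_imp_closed)
  have l0: "l0 \<in> H" if "H \<noteq> {}" using that by (simp add: l0_def some_in_eq)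
  have "infnorm l0 \<le> 2 * R"
  proof (cases "H = {}")
    case False
    then obtain y where "infnorm y \<le> R" "l0 = grid h y"
      using l0 by (auto simp: H_def heavy_grid_cells_def)
    then show ?thesis using infnorm_grid_le[OF h(1), of y] h by simp
  qed (use h in \<open>simp add: l0_def infnorm_0\<close>)
  note pt = infnorm_diff_merged_grid_label_le[OF h this s, of _ H]
  show ?thesis
  proof (rule that[of "merged_grid_label h R H l0"])
    show "simple_function M (merged_grid_label h R H l0)"
      by (rule simple_function_merged_grid_label[OF Mb H])
    show "\<kappa> \<le> measure M (merged_grid_label h R H l0 -` {l} \<inter> space M)"
      if "l \<in> merged_grid_label h R H l0 ` space M" for l
      using measure_merged_grid_label_ge[OF M Mb h(1) \<kappa>(2)] l0 that by (simp add: H_def)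
    show "(\<integral>\<^sup>+ x. ennreal (infnorm (x - merged_grid_label h R H l0 x) powr s) \<partial>M)
      \<le> ennreal (h powr s + (3 * R) powr s * (real (card (grid h ` {x::'a. infnorm x \<le> R})) * \<kappa>)
         + 3 powr s * R powr (s - \<beta>) * m)"
    proof (rule nn_integral_le_indicator_plus[OF M])
      show "{x. infnorm x \<le> R \<and> grid h x \<notin> H} \<in> sets M"
        using \<open>H \<in> sets borel\<close> Mb by measurable
      show "emeasure M {x. infnorm x \<le> R \<and> grid h x \<notin> H}
        \<le> ennreal (real (card (grid h ` {x::'a. infnorm x \<le> R})) * \<kappa>)"
        unfolding H_def using \<kappa>
        by (intro emeasure_light_grid_cells_le[OF prob_space.finite_measure[OF M] Mb h(1)]) auto
      show "(\<integral>\<^sup>+ x. ennreal (3 powr s * R powr (s - \<beta>) * infnorm x powr \<beta>) \<partial>M)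
        \<le> ennreal (3 powr s * R powr (s - \<beta>) * m)"
        using mom by (intro nn_integral_cmult_le) (auto simp: measurable_cong_sets[OF Mb refl])
    qed (use pt \<kappa> mom in \<open>auto simp: measurable_cong_sets[OF Mb refl]\<close>)
  qed
qed

section \<open>Balancing the quantization error\<close>

lemma quantization_exponents:
  fixes s \<beta> d :: real
  assumes "0 < s" "s < \<beta>" "0 \<le> d"
  defines "a \<equiv> s / ((s + d) * \<beta>)" and "b \<equiv> (\<beta> - s) / (\<beta> * (s + d))"
    and "e \<equiv> s * (\<beta> - s) / (\<beta> * (s + d))"
  shows "b * s = e" "1 - a * s - (a + b) * d = e" "a * (\<beta> - s) = e" "0 < a" "0 < b"
proof -
  have pos: "0 < \<beta>" "0 < s + d" using assms by linarith+
  show "b * s = e" "a * (\<beta> - s) = e"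
    using pos by (simp_all add: a_def b_def e_def field_simps)
  show "0 < a" "0 < b"
    using pos assms(1,2) by (auto simp: a_def b_def intro!: divide_pos_pos mult_pos_pos)
  have ab: "a = s / (\<beta> * (s + d))" "b = (\<beta> - s) / (\<beta> * (s + d))"
    by (simp_all add: a_def b_def mult.commute)
  hence "a + b = \<beta> / (\<beta> * (s + d))"
    by (simp add: add_divide_distrib[symmetric])
  hence "1 - a * s - (a + b) * d = (\<beta> * (s + d) - s * s - \<beta> * d) / (\<beta> * (s + d))"
    using pos by (simp add: ab(1) diff_divide_distrib)
  also have "\<beta> * (s + d) - s * s - \<beta> * d = s * (\<beta> - s)"
    by (simp add: algebra_simps)
  finally show "1 - a * s - (a + b) * d = e" by (simp add: e_def)
qed

lemma quantization_error_balance: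
  fixes \<kappa> s \<beta> d m :: real
  assumes \<kappa>: "0 < \<kappa>" "\<kappa> \<le> 1" and s: "0 < s" "s < \<beta>" and d: "0 \<le> d"
  defines "h \<equiv> \<kappa> powr ((\<beta> - s) / (\<beta> * (s + d)))" and "R \<equiv> \<kappa> powr (- (s / ((s + d) * \<beta>)))"
  shows "0 < h" "h \<le> R"
    "h powr s + (3 * R) powr s * ((5 * R / h) powr d * \<kappa>) + 3 powr s * R powr (s - \<beta>) * m
      = (1 + 3 powr s * 5 powr d + 3 powr s * m) * \<kappa> powr (s * (\<beta> - s) / (\<beta> * (s + d)))"
proof -
  define a where "a = s / ((s + d) * \<beta>)"
  define b where "b = (\<beta> - s) / (\<beta> * (s + d))"
  define e where "e = s * (\<beta> - s) / (\<beta> * (s + d))"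
  note ex = quantization_exponents[OF s d, folded a_def b_def e_def]
  have hR: "h = \<kappa> powr b" "R = \<kappa> powr (- a)" by (simp_all add: h_def b_def R_def a_def)
  have h: "0 < h" "h \<le> 1" using \<kappa> ex(5) by (simp_all add: hR powr_le1)
  have "0 < \<kappa> powr a" "\<kappa> powr a \<le> 1" using \<kappa> ex(4) by (simp_all add: powr_le1)
  hence R: "1 \<le> R" by (simp add: hR powr_minus_divide)
  show "0 < h" "h \<le> R" using h R by simp_all
  have "h powr s = \<kappa> powr e" using ex(1) by (simp add: hR powr_powr)
  moreover have "(3 * R) powr s * ((5 * R / h) powr d * \<kappa>) = 3 powr s * 5 powr d * \<kappa> powr e"
  proof -
    have "(3 * R) powr s * ((5 * R / h) powr d * \<kappa>) = 3 powr s * 5 powr d * (R powr s * (R / h) powr d * \<kappa>)"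
      using h R by (simp add: powr_mult powr_divide)
    also have "R powr s * (R / h) powr d * \<kappa> = \<kappa> powr (- a * s) * \<kappa> powr ((- a - b) * d) * \<kappa> powr 1"
      using \<kappa> by (simp add: hR powr_powr powr_diff[symmetric] algebra_simps)
    also have "\<dots> = \<kappa> powr e"
      unfolding ex(2)[symmetric] by (simp only: powr_add[symmetric]) (simp add: algebra_simps)
    finally show ?thesis .
  qed
  moreover have "R powr (s - \<beta>) = \<kappa> powr e"
    using ex(3) by (simp add: hR powr_powr algebra_simps)
  ultimately show "h powr s + (3 * R) powr s * ((5 * R / h) powr d * \<kappa>) + 3 powr s * R powr (s - \<beta>) * m
      = (1 + 3 powr s * 5 powr d + 3 powr s * m) * \<kappa> powr (s * (\<beta> - s) / (\<beta> * (s + d)))"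
    unfolding e_def[symmetric] by (simp add: algebra_simps)
qed

lemma eps_block_le_powr:
  fixes M :: "'a::euclidean_space measure" and W :: "'a \<Rightarrow> 'a \<Rightarrow> real"
    and C \<alpha> \<beta> p m \<kappa> :: real
  assumes M: "prob_space M" and Mb: "sets M = sets borel" and G: "graphon M W"
    and H: "\<forall>x x' y. \<bar>W x y - W x' y\<bar> \<le> C * infnorm (x - x') powr \<alpha>"
    and C: "0 \<le> C" and \<alpha>: "0 < \<alpha>" and p: "0 < p" "p * \<alpha> < \<beta>"
    and mom: "(\<integral>\<^sup>+ x. ennreal (infnorm x powr \<beta>) \<partial>M) \<le> ennreal m" "0 \<le> m"
    and \<kappa>: "0 < \<kappa>" "\<kappa> \<le> 1"
  shows "eps_block p \<kappa> M W
    \<le> ennreal ((2 * ((2 * C) powr p * (1 + 3 powr (\<alpha> * p) * 5 powr DIM('a) + 3 powr (\<alpha> * p) * m)))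
          powr (1/p) * \<kappa> powr (\<alpha> * (\<beta> - p * \<alpha>) / (\<beta> * (p * \<alpha> + DIM('a)))))"
proof -
  define s where "s = \<alpha> * p"
  define d where "d = real DIM('a)"
  define e where "e = s * (\<beta> - s) / (\<beta> * (s + d))"
  define K where "K = 1 + 3 powr s * 5 powr d + 3 powr s * m"
  define h where "h = \<kappa> powr ((\<beta> - s) / (\<beta> * (s + d)))"
  define R where "R = \<kappa> powr (- (s / ((s + d) * \<beta>)))"
  have s: "0 < s" "s < \<beta>" using \<alpha> p by (simp_all add: s_def mult.commute)
  have d: "0 \<le> d" by (simp add: d_def)
  note balance = quantization_error_balance[OF \<kappa> s d, folded h_def R_def e_def]
  obtain lab where lab: "simple_function M lab"
    and heavy: "\<And>l. l \<in> lab ` space M \<Longrightarrow> \<kappa> \<le> measure M (lab -` {l} \<inter> space M)"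
    and Q: "(\<integral>\<^sup>+ x. ennreal (infnorm (x - lab x) powr s) \<partial>M)
      \<le> ennreal (h powr s + (3 * R) powr s * (real (card (grid h ` {x::'a. infnorm x \<le> R})) * \<kappa>)
         + 3 powr s * R powr (s - \<beta>) * m)"
    using grid_quantization[OF M Mb \<kappa> balance(1,2), of s \<beta> m] s mom by auto
  have "h powr s + (3 * R) powr s * (real (card (grid h ` {x::'a. infnorm x \<le> R})) * \<kappa>)
      + 3 powr s * R powr (s - \<beta>) * m
    \<le> h powr s + (3 * R) powr s * ((5 * R / h) powr d * \<kappa>) + 3 powr s * R powr (s - \<beta>) * m"
    using card_grid_image_le[OF balance(1,2)] balance(1,2) \<kappa>
    by (intro add_mono mult_left_mono mult_right_mono) (auto simp: d_def powr_realpow)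
  also have "\<dots> = K * \<kappa> powr e" unfolding K_def by (rule balance(3))
  finally have Qe: "(\<integral>\<^sup>+ x. ennreal (infnorm (x - lab x) powr s) \<partial>M) \<le> ennreal (K * \<kappa> powr e)"
    using Q by (blast intro: order_trans ennreal_leI)
  have "e = p * (\<alpha> * (\<beta> - s) / (\<beta> * (s + d)))"
    by (simp add: e_def s_def ac_simps)
  hence e: "e / p = \<alpha> * (\<beta> - p * \<alpha>) / (\<beta> * (p * \<alpha> + DIM('a)))"
    using p by (simp add: s_def d_def mult.commute)
  from eps_block_le_quantization_error[OF M Mb G H C p(1) lab heavy Qe[unfolded s_def]]
  have "eps_block p \<kappa> M W \<le> ennreal ((2 * ((2 * C) powr p * (K * \<kappa> powr e))) powr (1/p))"
    using mom by (simp add: K_def)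
  also have "(2 * ((2 * C) powr p * (K * \<kappa> powr e))) powr (1/p)
      = (2 * ((2 * C) powr p * K)) powr (1/p) * \<kappa> powr (e / p)"
    using C mom p by (simp add: K_def powr_mult powr_powr mult.assoc)
  finally show ?thesis by (simp add: e K_def s_def d_def)
qed

lemma block_exponent_eq:
  fixes \<alpha> \<beta> p D :: real
  assumes "0 < \<alpha>" "0 < p" "0 < \<beta>"
  shows "(\<alpha> / (p * \<alpha> + D)) * ((\<beta> / (p * \<alpha>) - 1) / (1 + (\<beta> / (p * \<alpha>) - 1)))
    = \<alpha> * (\<beta> - p * \<alpha>) / (\<beta> * (p * \<alpha> + D))"
proof -
  have ratio: "(\<beta> / (p * \<alpha>) - 1) / (1 + (\<beta> / (p * \<alpha>) - 1)) = (\<beta> - p * \<alpha>) / \<beta>"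
    using assms by (simp add: field_simps)
  show ?thesis unfolding ratio by (simp add: mult.commute)
qed

theorem proposition6p3:
  fixes M :: "'a::euclidean_space measure" and \<alpha> \<beta> C p :: real
  assumes "prob_space M" and "sets M = sets borel"
    and "0 < \<alpha>" and "\<alpha> \<le> 1" and "\<beta> \<ge> \<alpha>"
    and "(\<integral>\<^sup>+ x. ennreal (infnorm x powr \<beta>) \<partial>M) < \<infinity>"
    and "1 \<le> p" and "p < \<beta> / \<alpha>"
  shows "\<exists>K. \<forall>W. graphon M W
      \<and> (\<integral>\<^sup>+ z. ennreal \<bar>W (fst z) (snd z)\<bar> \<partial>(M \<Otimes>\<^sub>M M)) = 1
      \<and> (\<forall>x x' y. \<bar>W x y - W x' y\<bar> \<le> C * infnorm (x - x') powr \<alpha>)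
      \<longrightarrow> (\<forall>\<kappa>. 0 < \<kappa> \<and> \<kappa> \<le> 1/2 \<longrightarrow>
             eps_block p \<kappa> M W
               \<le> ennreal (K * \<kappa> powr ((\<alpha> / (p * \<alpha> + DIM('a)))
                    * ((\<beta> / (p * \<alpha>) - 1) / (1 + (\<beta> / (p * \<alpha>) - 1))))))
        \<and> (\<forall>\<rho>>0. graphon_tail p \<rho> M W \<le> ennreal (K * \<rho> powr (\<beta> / (p * \<alpha>) - 1)))"
proof -
  note M = assms(1,2) and \<alpha> = assms(3,4,5) and p = assms(7,8)
  have p\<alpha>: "0 < p" "p * \<alpha> < \<beta>" "p \<le> \<beta> / \<alpha>" "0 < \<beta>"
    using p \<alpha> by (auto simp: field_simps)
  define C' where "C' = max C 0"
  define m where "m = enn2real (\<integral>\<^sup>+ x. ennreal (infnorm x powr \<beta>) \<partial>M)"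
  have mom: "(\<integral>\<^sup>+ x. ennreal (infnorm x powr \<beta>) \<partial>M) \<le> ennreal m" "0 \<le> m"
    using assms(6) by (simp_all add: m_def ennreal_enn2real less_top)
  define Ke where "Ke = (2 * ((2 * C') powr p * (1 + 3 powr (\<alpha> * p) * 5 powr DIM('a) + 3 powr (\<alpha> * p) * m)))
    powr (1/p)"
  define Kt where "Kt = (3 powr (\<beta>/\<alpha>) * ((1 + 2 * (C' * (1 + m))) powr (\<beta>/\<alpha>) + 2 * (C' powr (\<beta>/\<alpha>) * m)))
    powr (1/p)"
  have max: "ennreal (K * t) \<le> ennreal (max Ke Kt * t)" if "K = Ke \<or> K = Kt" "0 \<le> t" for K t
    using that by (auto intro!: ennreal_leI mult_right_mono)
  show ?thesis
  proof (rule exI[of _ "max Ke Kt"], intro allI impI conjI)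
    fix W assume "graphon M W \<and> (\<integral>\<^sup>+ z. ennreal \<bar>W (fst z) (snd z)\<bar> \<partial>(M \<Otimes>\<^sub>M M)) = 1
      \<and> (\<forall>x x' y. \<bar>W x y - W x' y\<bar> \<le> C * infnorm (x - x') powr \<alpha>)"
    hence G: "graphon M W" and N1: "(\<integral>\<^sup>+ z. ennreal \<bar>W (fst z) (snd z)\<bar> \<partial>(M \<Otimes>\<^sub>M M)) = 1"
      and H: "\<forall>x x' y. \<bar>W x y - W x' y\<bar> \<le> C' * infnorm (x - x') powr \<alpha>"
      by (auto simp: C'_def intro: order_trans[OF _ mult_right_mono[OF max.cobounded1]])
    have C': "0 \<le> C'" by (simp add: C'_def)
    show "eps_block p \<kappa> M W \<le> ennreal (max Ke Kt * \<kappa> powr ((\<alpha> / (p * \<alpha> + DIM('a)))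
        * ((\<beta> / (p * \<alpha>) - 1) / (1 + (\<beta> / (p * \<alpha>) - 1)))))" if "0 < \<kappa> \<and> \<kappa> \<le> 1/2" for \<kappa>
      unfolding block_exponent_eq[OF \<alpha>(1) p\<alpha>(1,4)]
      by (rule order_trans[OF eps_block_le_powr[OF M G H C' \<alpha>(1) p\<alpha>(1,2) mom, folded Ke_def] max])
        (use that in auto)
    show "graphon_tail p \<rho> M W \<le> ennreal (max Ke Kt * \<rho> powr (\<beta> / (p * \<alpha>) - 1))" if "\<rho> > 0" for \<rho>
      by (rule order_trans[OF holder_graphon_tail_le[OF M G N1 H C' \<alpha> p\<alpha>(1,3) mom that, folded Kt_def] max])
        auto
  qed
qed

end
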